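(* Let $R\in(-1,1)^{M+1}$, $T_n=\sqrt{1-R_n^2}$, and let $\mathsf{p}\in\mathsf{S}_M$ with $(k,b)=(\kappa(\mathsf{p}),\beta(\mathsf{p}))$. Then $$w(\mathsf{p})=(-R)^{\tilde k-b}R^{k-b}T^{2b}.$$
   Context: Scattering sequences: $\mathsf{S}_M$ ($M\ge1$) is the set of integer sequences $\mathsf{p}=(i_0,\ldots,i_L)$ with $L\ge2$, $i_0=i_L=-1$, $i_j\in\{0,\ldots,M\}$ for $1\le j\le L-1$, and $|i_{j+1}-i_j|=1$ for all $j$. $\kappa(\mathsf{p})=(k_0,\ldots,k_M)$: $k_n$ is the number of maximal blocks of consecutive indices $j\in\{0,\ldots,L\}$ with $i_j\ge n$; $\beta(\mathsf{p})=(b_0,\ldots,b_M)$: $b_n$ is the number of those blocks containing at least two indices. Weight: for $1\le j\le L-1$ with $i_j=m$, set $w_j=R_m$ if $i_{j-1}=i_{j+1}=m-1$; $w_j=-R_m$ if $i_{j-1}=i_{j+1}=m+1$; $w_j=\sqrt{1-R_m^2}$ otherwise; $w(\mathsf{p})=\prod_{j=1}^{L-1}w_j$. $\tilde k=(k_1,\ldots,k_M,0)$. Multi-index powers: $S^d=\prod_{n=0}^M S_n^{d_n}$. *)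

theory Defs
  imports Complex_Main
begin

text \<open>A sequence p = (i_0,...,i_L) is an int list of length L+1; L = length p - 1.\<close>

definition scat_seq :: "nat \<Rightarrow> int list \<Rightarrow> bool" where
  "scat_seq M p \<longleftrightarrow> (let L = length p - 1 in
     length p \<ge> 3 \<and> p ! 0 = -1 \<and> p ! L = -1 \<and>
     (\<forall>j. 1 \<le> j \<and> j \<le> L - 1 \<longrightarrow> 0 \<le> p ! j \<and> p ! j \<le> int M) \<and>
     (\<forall>j<L. \<bar>p ! (Suc j) - p ! j\<bar> = 1))"

definition blocks :: "int list \<Rightarrow> nat \<Rightarrow> (nat \<times> nat) set" where
  "blocks p n = {(a, b). a \<le> b \<and> b \<le> length p - 1 \<and>
      (\<forall>j. a \<le> j \<and> j \<le> b \<longrightarrow> p ! j \<ge> int n) \<and>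
      (a = 0 \<or> p ! (a - 1) < int n) \<and>
      (b = length p - 1 \<or> p ! (Suc b) < int n)}"

definition kappa :: "int list \<Rightarrow> nat \<Rightarrow> nat" where
  "kappa p n = card (blocks p n)"

definition beta :: "int list \<Rightarrow> nat \<Rightarrow> nat" where
  "beta p n = card {(a, b) \<in> blocks p n. a < b}"

definition kappa_tilde :: "nat \<Rightarrow> int list \<Rightarrow> nat \<Rightarrow> nat" where
  "kappa_tilde M p n = (if n < M then kappa p (Suc n) else 0)"

definition wj :: "(nat \<Rightarrow> real) \<Rightarrow> int list \<Rightarrow> nat \<Rightarrow> real" where
  "wj R p j = (let m = p ! j in
     if p ! (j - 1) = m - 1 \<and> p ! (Suc j) = m - 1 then R (nat m)
     else if p ! (j - 1) = m + 1 \<and> p ! (Suc j) = m + 1 then - R (nat m)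
     else sqrt (1 - (R (nat m))\<^sup>2))"

definition weight :: "(nat \<Rightarrow> real) \<Rightarrow> int list \<Rightarrow> real" where
  "weight R p = (\<Prod>j\<in>{1..length p - 2}. wj R p j)"

end

theory Submission imports Defs begin

(* Every interior index j of a scattering sequence p sits at some level m = p!j and has one
   of four local shapes, determined by its neighbours: a peak (m-1,m,m-1) with weight R m,
   a valley (m+1,m,m+1) with weight -R m, an ascent (m-1,m,m+1) or a descent (m+1,m,m-1),
   both with weight T m = sqrt (1 - (R m)^2).  Grouping the product defining the weight by
   levels, the factor of level n is R^#peaks (-R)^#valleys T^(#ascents + #descents).
   It remains to count shapes in terms of blocks:
   - a maximal block at level n is determined by its first index, which is an index where
     the path enters level n from n-1; entries are peaks or ascents, so k_n = #peaks + #ascents;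
   - a block has at least two indices iff its entry is an ascent, so b_n = #ascents;
   - entries into level n+1 happen right after ascents or valleys at level n,
     so k_(n+1) = #ascents + #valleys, and at the top level M there are none of either;
   - the path starts and ends at -1, so it crosses between n-1 and n equally often
     upwards and downwards, which gives #descents = #ascents. *)

lemma card_less_Suc_filter:
  "card {s. s < Suc t \<and> Q s} = card {s. s < t \<and> Q s} + (if Q t then 1 else 0)"
proof -
  have "{s. s < Suc t \<and> Q s} = (if Q t then insert t {s. s < t \<and> Q s} else {s. s < t \<and> Q s})"
    by (auto simp: less_Suc_eq)
  then show ?thesis by simp
qed

lemma crossing_balance:
  fixes f :: "nat \<Rightarrow> int"
  assumes "\<forall>s<t. \<bar>f (Suc s) - f s\<bar> = 1"
  shows "int (card {s. s < t \<and> f s = c \<and> f (Suc s) = c + 1})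
       - int (card {s. s < t \<and> f s = c + 1 \<and> f (Suc s) = c})
       = (if f t \<ge> c + 1 then 1 else 0) - (if f 0 \<ge> c + 1 then 1 else 0)"
  using assms
proof (induction t)
  case 0
  then show ?case by simp
next
  case (Suc t)
  then have step: "\<bar>f (Suc t) - f t\<bar> = 1" and
    IH: "int (card {s. s < t \<and> f s = c \<and> f (Suc s) = c + 1})
       - int (card {s. s < t \<and> f s = c + 1 \<and> f (Suc s) = c})
       = (if f t \<ge> c + 1 then 1 else 0) - (if f 0 \<ge> c + 1 then 1 else 0)"
    by auto
  show ?case
    unfolding card_less_Suc_filter[of t "\<lambda>s. f s = c \<and> f (Suc s) = c + 1"]
      card_less_Suc_filter[of t "\<lambda>s. f s = c + 1 \<and> f (Suc s) = c"]
    using IH step by (cases "f (Suc t) = f t + 1") (simp_all add: abs_if split: if_split_asm)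
qed

locale scattering_sequence =
  fixes M :: nat and p :: "int list"
  assumes scat: "scat_seq M p"
begin

definition L :: nat where "L = length p - 1"

lemma L_ge_2: "L \<ge> 2"
  using scat unfolding scat_seq_def L_def Let_def by auto

lemma first_eq: "p ! 0 = -1"
  using scat unfolding scat_seq_def L_def Let_def by auto

lemma last_eq: "p ! L = -1"
  using scat unfolding scat_seq_def L_def Let_def by auto

lemma interior_range: "1 \<le> j \<Longrightarrow> j \<le> L - 1 \<Longrightarrow> 0 \<le> p ! j \<and> p ! j \<le> int M"
  using scat unfolding scat_seq_def L_def Let_def by auto

lemma unit_step: "j < L \<Longrightarrow> \<bar>p ! Suc j - p ! j\<bar> = 1"
  using scat unfolding scat_seq_def L_def Let_def by auto

definition shape :: "int \<Rightarrow> int \<Rightarrow> int \<Rightarrow> nat set" where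
  "shape x y z = {j. 1 \<le> j \<and> j \<le> L - 1 \<and> p ! (j - 1) = x \<and> p ! j = y \<and> p ! Suc j = z}"

abbreviation peaks :: "nat \<Rightarrow> nat set" where
  "peaks n \<equiv> shape (int n - 1) (int n) (int n - 1)"
abbreviation valleys :: "nat \<Rightarrow> nat set" where
  "valleys n \<equiv> shape (int n + 1) (int n) (int n + 1)"
abbreviation ascents :: "nat \<Rightarrow> nat set" where
  "ascents n \<equiv> shape (int n - 1) (int n) (int n + 1)"
abbreviation descents :: "nat \<Rightarrow> nat set" where
  "descents n \<equiv> shape (int n + 1) (int n) (int n - 1)"

lemma finite_shape: "finite (shape x y z)"
  unfolding shape_def by (rule finite_subset[of _ "{..L}"]) auto

definition entries :: "nat \<Rightarrow> nat set" where
  "entries n = {j. 1 \<le> j \<and> j \<le> L - 1 \<and> p ! (j - 1) = int n - 1 \<and> p ! j = int n}"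

lemma blocksD:
  assumes "(a, b) \<in> blocks p n"
  shows "a \<in> entries n" "a \<le> b" "b \<le> L" "\<And>j. a \<le> j \<Longrightarrow> j \<le> b \<Longrightarrow> p ! j \<ge> int n"
    "b = L \<or> p ! Suc b < int n"
proof -
  have ab: "a \<le> b" "b \<le> L" "\<And>j. a \<le> j \<Longrightarrow> j \<le> b \<Longrightarrow> p ! j \<ge> int n"
    "a = 0 \<or> p ! (a - 1) < int n" "b = L \<or> p ! Suc b < int n"
    using assms unfolding blocks_def L_def by auto
  then show "a \<le> b" "b \<le> L" "\<And>j. a \<le> j \<Longrightarrow> j \<le> b \<Longrightarrow> p ! j \<ge> int n"
    "b = L \<or> p ! Suc b < int n" by auto
  have pa: "p ! a \<ge> int n" using ab by auto
  then have "a \<noteq> 0" "a \<noteq> L" by (intro notI, use first_eq last_eq in simp)+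
  then have "p ! (a - 1) < int n" "\<bar>p ! a - p ! (a - 1)\<bar> = 1"
    using ab unit_step[of "a - 1"] by auto
  then show "a \<in> entries n"
    unfolding entries_def using pa \<open>a \<noteq> 0\<close> \<open>a \<noteq> L\<close> ab(1,2) by auto
qed

lemma inj_on_fst_blocks: "inj_on fst (blocks p n)"
proof (rule inj_onI)
  fix x y assume x: "x \<in> blocks p n" and y: "y \<in> blocks p n" and "fst x = fst y"
  then obtain a b b' where xy: "x = (a, b)" "y = (a, b')" by (cases x, cases y) auto
  note X = blocksD[of a b n] and Y = blocksD[of a b' n]
  have "\<not> b < b'" using X(2,5) Y(3) Y(4)[of "Suc b"] x y xy by fastforce
  moreover have "\<not> b' < b" using Y(2,5) X(3) X(4)[of "Suc b'"] x y xy by fastforce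
  ultimately show "x = y" using xy by simp
qed

(* Every entry into level n starts a maximal block, ending at the first index after it
   that is followed by a lower value (or is the last index). *)
lemma fst_blocks: "fst ` blocks p n = entries n"
proof
  show "fst ` blocks p n \<subseteq> entries n" using blocksD by auto
next
  show "entries n \<subseteq> fst ` blocks p n"
  proof
    fix a assume "a \<in> entries n"
    then have aL: "a \<le> L" and a1: "1 \<le> a" and before: "p ! (a - 1) = int n - 1"
      and pa: "p ! a = int n"
      unfolding entries_def by auto
    define Q where "Q j \<longleftrightarrow> a \<le> j \<and> (j = L \<or> p ! Suc j < int n)" for j
    define b where "b = (LEAST j. Q j)"
    have QL: "Q L" using aL Q_def by auto
    have Qb: "Q b" unfolding b_def by (rule LeastI[of Q, OF QL])
    have bL: "b \<le> L" unfolding b_def by (rule Least_le[of Q L, OF QL])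
    have not_Q: "\<And>j. j < b \<Longrightarrow> \<not> Q j" unfolding b_def by (rule not_less_Least)
    have above: "a + d \<le> b \<Longrightarrow> p ! (a + d) \<ge> int n" for d
    proof (induction d)
      case 0
      then show ?case using pa by simp
    next
      case (Suc d)
      then have "\<not> Q (a + d)" using not_Q by simp
      then show ?case using Suc by (simp add: Q_def)
    qed
    have "\<And>j. a \<le> j \<Longrightarrow> j \<le> b \<Longrightarrow> p ! j \<ge> int n"
      using above by (metis le_add_diff_inverse)
    then have "(a, b) \<in> blocks p n"
      unfolding blocks_def using Qb bL before a1 unfolding Q_def L_def by auto
    then show "a \<in> fst ` blocks p n" by force
  qed
qed

lemma kappa_entries: "kappa p n = card (entries n)"
  unfolding kappa_def using card_image[OF inj_on_fst_blocks] fst_blocks by simp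

lemma beta_entries: "beta p n = card {j \<in> entries n. p ! Suc j = int n + 1}"
proof -
  let ?B = "{(a, b) \<in> blocks p n. a < b}"
  have inj: "inj_on fst ?B" using inj_on_fst_blocks by (rule inj_on_subset) auto
  have "fst ` ?B = {j \<in> entries n. p ! Suc j = int n + 1}"
  proof (intro equalityI subsetI)
    fix x assume "x \<in> fst ` ?B"
    then obtain a b where ab: "(a, b) \<in> blocks p n" "a < b" "x = a" by auto
    note blk = blocksD[OF ab(1)]
    have "p ! a = int n" using blk(1) unfolding entries_def by auto
    moreover have "p ! Suc a \<ge> int n" using blk(4)[of "Suc a"] ab by auto
    moreover have "\<bar>p ! Suc a - p ! a\<bar> = 1" using unit_step[of a] ab blk by auto
    ultimately show "x \<in> {j \<in> entries n. p ! Suc j = int n + 1}" using blk(1) ab by auto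
  next
    fix a assume a: "a \<in> {j \<in> entries n. p ! Suc j = int n + 1}"
    then obtain b where ab: "(a, b) \<in> blocks p n" using fst_blocks by force
    note blk = blocksD[OF ab]
    have "a \<noteq> b" using blk(5) last_eq a unfolding entries_def by auto
    then show "a \<in> fst ` ?B" using ab blk(2) by force
  qed
  then show ?thesis unfolding beta_def using card_image[OF inj] by simp
qed

lemma entries_split: "entries n = peaks n \<union> ascents n"
proof (intro equalityI subsetI)
  fix j assume j: "j \<in> entries n"
  then have "\<bar>p ! Suc j - p ! j\<bar> = 1" using L_ge_2 unit_step[of j] unfolding entries_def by auto
  then show "j \<in> peaks n \<union> ascents n" using j unfolding entries_def shape_def by auto
qed (auto simp: entries_def shape_def)

lemma kappa_shapes: "kappa p n = card (peaks n) + card (ascents n)"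
  unfolding kappa_entries entries_split
  by (rule card_Un_disjoint) (auto simp: finite_shape shape_def)

lemma beta_shapes: "beta p n = card (ascents n)"
proof -
  have "{j \<in> entries n. p ! Suc j = int n + 1} = ascents n"
    unfolding entries_split by (auto simp: shape_def)
  then show ?thesis using beta_entries by simp
qed

lemma entries_Suc: "entries (Suc n) = Suc ` (ascents n \<union> valleys n)"
proof (intro equalityI subsetI)
  fix j assume "j \<in> entries (Suc n)"
  then have j: "1 \<le> j" "j \<le> L - 1" "p ! (j - 1) = int n" "p ! j = int n + 1"
    unfolding entries_def by auto
  then have "j \<ge> 2" using first_eq by (cases "j = 1") auto
  then have "\<bar>p ! (j - 1) - p ! (j - 2)\<bar> = 1"
    using unit_step[of "j - 2"] j by (simp add: Suc_diff_Suc numeral_2_eq_2)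
  then have "j - 1 \<in> ascents n \<union> valleys n"
    using j \<open>j \<ge> 2\<close> unfolding shape_def by (auto simp: numeral_2_eq_2)
  moreover have "j = Suc (j - 1)" using \<open>j \<ge> 2\<close> by simp
  ultimately show "j \<in> Suc ` (ascents n \<union> valleys n)" by blast
next
  fix j assume "j \<in> Suc ` (ascents n \<union> valleys n)"
  then obtain s where s: "j = Suc s" "1 \<le> s" "s \<le> L - 1" "p ! s = int n" "p ! Suc s = int n + 1"
    unfolding shape_def by auto
  then have "Suc s \<noteq> L" using last_eq by auto
  then show "j \<in> entries (Suc n)" using s L_ge_2 unfolding entries_def by auto
qed

lemma kappa_Suc_shapes: "kappa p (Suc n) = card (ascents n) + card (valleys n)"
proof -
  have "kappa p (Suc n) = card (ascents n \<union> valleys n)"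
    unfolding kappa_entries entries_Suc by (simp add: card_image)
  also have "\<dots> = card (ascents n) + card (valleys n)"
    by (rule card_Un_disjoint) (auto simp: finite_shape shape_def)
  finally show ?thesis .
qed

lemma entries_shift: "entries n = Suc ` {s. s < L \<and> p ! s = int n - 1 \<and> p ! Suc s = int n}"
proof (intro equalityI subsetI)
  fix j assume j: "j \<in> entries n"
  then have "j = Suc (j - 1)" "j - 1 < L" unfolding entries_def by auto
  then show "j \<in> Suc ` {s. s < L \<and> p ! s = int n - 1 \<and> p ! Suc s = int n}"
    using j unfolding entries_def by (intro image_eqI[of j Suc "j - 1"]) auto
next
  fix j assume "j \<in> Suc ` {s. s < L \<and> p ! s = int n - 1 \<and> p ! Suc s = int n}"
  then obtain s where s: "j = Suc s" "s < L" "p ! s = int n - 1" "p ! Suc s = int n" by auto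
  then have "Suc s \<noteq> L" using last_eq by auto
  then show "j \<in> entries n" using s unfolding entries_def by auto
qed

lemma down_crossings: "{s. s < L \<and> p ! s = int n \<and> p ! Suc s = int n - 1} = peaks n \<union> descents n"
proof (intro equalityI subsetI)
  fix s assume s: "s \<in> {s. s < L \<and> p ! s = int n \<and> p ! Suc s = int n - 1}"
  then have "s \<noteq> 0" using first_eq by (cases s) auto
  then have "\<bar>p ! s - p ! (s - 1)\<bar> = 1" using unit_step[of "s - 1"] s by auto
  then show "s \<in> peaks n \<union> descents n" using s \<open>s \<noteq> 0\<close> unfolding shape_def by auto
qed (auto simp: shape_def)

(* Since the path starts and ends below level 0, it crosses between n-1 and n as often
   upwards as downwards. *)
lemma card_descents: "card (descents n) = card (ascents n)"
proof -
  have "int (card {s. s < L \<and> p ! s = int n - 1 \<and> p ! Suc s = int n - 1 + 1})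
      - int (card {s. s < L \<and> p ! s = int n - 1 + 1 \<and> p ! Suc s = int n - 1}) = 0"
    using crossing_balance[of L "\<lambda>s. p ! s" "int n - 1"] unit_step first_eq last_eq by simp
  then have "card (entries n) = card (peaks n \<union> descents n)"
    unfolding entries_shift down_crossings[symmetric] by (simp add: card_image)
  also have "\<dots> = card (peaks n) + card (descents n)"
    by (rule card_Un_disjoint) (auto simp: finite_shape shape_def)
  finally show ?thesis using kappa_shapes kappa_entries by simp
qed

(* Nothing lies above the top level M, so there are no ascents or valleys there. *)
lemma no_ascents_top: "ascents M = {}"
proof -
  have False if "j \<in> ascents M" for j
  proof -
    have j: "1 \<le> j" "j \<le> L - 1" "p ! Suc j = int M + 1" using that unfolding shape_def by auto
    show False
    proof (cases "Suc j = L")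
      case True
      then show ?thesis using last_eq j by simp
    next
      case False
      then have "Suc j \<le> L - 1" using j by linarith
      then show ?thesis using interior_range[of "Suc j"] j by auto
    qed
  qed
  then show ?thesis by blast
qed

lemma no_valleys_top: "valleys M = {}"
proof -
  have False if "j \<in> valleys M" for j
  proof -
    have j: "1 \<le> j" "j \<le> L - 1" "p ! (j - 1) = int M + 1" using that unfolding shape_def by auto
    show False
    proof (cases "j = 1")
      case True
      then show ?thesis using first_eq j by simp
    next
      case False
      then have "1 \<le> j - 1" "j - 1 \<le> L - 1" using j by auto
      then show ?thesis using interior_range[of "j - 1"] j by auto
    qed
  qed
  then show ?thesis by blast
qed

lemma kappa_tilde_shapes: "n \<le> M \<Longrightarrow> kappa_tilde M p n = card (ascents n) + card (valleys n)"
  unfolding kappa_tilde_def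
  using kappa_Suc_shapes no_ascents_top no_valleys_top by (cases "n = M") auto

lemma prod_shape:
  "(\<Prod>j\<in>shape x y z. wj R p j) = (if x = y - 1 \<and> z = y - 1 then R (nat y)
     else if x = y + 1 \<and> z = y + 1 then - R (nat y) else sqrt (1 - (R (nat y))\<^sup>2)) ^ card (shape x y z)"
proof -
  have "wj R p j = (if x = y - 1 \<and> z = y - 1 then R (nat y)
     else if x = y + 1 \<and> z = y + 1 then - R (nat y) else sqrt (1 - (R (nat y))\<^sup>2))"
    if "j \<in> shape x y z" for j
    using that unfolding wj_def shape_def Let_def by auto
  then show ?thesis by simp
qed

lemma level_split:
  "{j \<in> {1..L - 1}. nat (p ! j) = n} = ((peaks n \<union> valleys n) \<union> ascents n) \<union> descents n"
proof (intro equalityI subsetI)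
  fix j assume j: "j \<in> {j \<in> {1..L - 1}. nat (p ! j) = n}"
  then have "p ! j = int n" using interior_range[of j] by auto
  moreover have "\<bar>p ! Suc j - p ! j\<bar> = 1" "\<bar>p ! j - p ! (j - 1)\<bar> = 1"
    using unit_step[of j] unit_step[of "j - 1"] j L_ge_2 by auto
  ultimately show "j \<in> ((peaks n \<union> valleys n) \<union> ascents n) \<union> descents n"
    using j unfolding shape_def by auto
qed (auto simp: shape_def)

lemma level_weight:
  "(\<Prod>j \<in> {j \<in> {1..L - 1}. nat (p ! j) = n}. wj R p j) =
     R n ^ card (peaks n) * (- R n) ^ card (valleys n)
     * sqrt (1 - (R n)\<^sup>2) ^ card (ascents n) * sqrt (1 - (R n)\<^sup>2) ^ card (descents n)"
proof -
  have disjoint: "peaks n \<inter> valleys n = {}" "(peaks n \<union> valleys n) \<inter> ascents n = {}"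
    "((peaks n \<union> valleys n) \<union> ascents n) \<inter> descents n = {}"
    by (auto simp: shape_def)
  show ?thesis
    unfolding level_split
    by (simp add: prod.union_disjoint[OF _ _ disjoint(3)] prod.union_disjoint[OF _ _ disjoint(2)]
        prod.union_disjoint[OF _ _ disjoint(1)] finite_shape prod_shape)
qed

lemma level_weight_blocks:
  assumes "n \<le> M"
  shows "(\<Prod>j \<in> {j \<in> {1..L - 1}. nat (p ! j) = n}. wj R p j) =
     (- R n) powi (int (kappa_tilde M p n) - int (beta p n))
     * (R n) powi (int (kappa p n) - int (beta p n))
     * (sqrt (1 - (R n)\<^sup>2)) ^ (2 * beta p n)"
proof -
  have "int (kappa_tilde M p n) - int (beta p n) = int (card (valleys n))"
    "int (kappa p n) - int (beta p n) = int (card (peaks n))"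
    "2 * beta p n = card (ascents n) + card (descents n)"
    using kappa_tilde_shapes[OF assms] kappa_shapes beta_shapes card_descents by simp_all
  then show ?thesis
    unfolding level_weight by (simp add: power_add mult_ac)
qed

end

theorem lemma6p2:
  fixes M :: nat and R :: "nat \<Rightarrow> real" and p :: "int list"
  assumes "M \<ge> 1"
    and "\<forall>n\<le>M. -1 < R n \<and> R n < 1"
    and "scat_seq M p"
  shows "weight R p =
    (\<Prod>n\<le>M. (- R n) powi (int (kappa_tilde M p n) - int (beta p n))
           * (R n) powi (int (kappa p n) - int (beta p n))
           * (sqrt (1 - (R n)\<^sup>2)) ^ (2 * beta p n))"
proof -
  interpret scattering_sequence M p by standard (rule assms(3))
  have levels: "(\<lambda>j. nat (p ! j)) ` {1..L - 1} \<subseteq> {..M}"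
    using interior_range by (auto simp: nat_le_iff)
  have "weight R p = (\<Prod>j\<in>{1..L - 1}. wj R p j)"
    unfolding weight_def L_def by (simp add: numeral_2_eq_2)
  also have "\<dots> = (\<Prod>n\<le>M. \<Prod>j \<in> {j \<in> {1..L - 1}. nat (p ! j) = n}. wj R p j)"
    using prod.group[OF _ _ levels, symmetric] by auto
  also have "\<dots> = (\<Prod>n\<le>M. (- R n) powi (int (kappa_tilde M p n) - int (beta p n))
           * (R n) powi (int (kappa p n) - int (beta p n))
           * (sqrt (1 - (R n)\<^sup>2)) ^ (2 * beta p n))"
    by (rule prod.cong[OF refl], rule level_weight_blocks) simp
  finally show ?thesis .
qed

end
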